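(* For all positive integers $n,k$, $$S^+(n+k) \geq S^+(n+1)\,S^+(k).$$
   Context: A set $A \subseteq \mathbb{N}$ is sum-free if for all $(a,b)\in A^2$ (allowing $a=b$), $a+b \notin A$. For positive integers $p,n$, an S-template with $n$ colors and width $p$ is a partition of $\{1,\dots,p\}$ into $n$ sum-free subsets $A_1,\dots,A_n$ such that for every $i \in \{1,\dots,n-1\}$ (i.e. every subset except $A_n$) and all $(x,y)\in A_i^2$: if $x+y>p$ then $x+y-p \notin A_i$. $S^+(n)$ denotes the greatest width of an S-template with $n$ colors. *)

theory Defs
  imports Main
begin

definition sum_free :: "nat set \<Rightarrow> bool" where
  "sum_free A \<longleftrightarrow> (\<forall>a\<in>A. \<forall>b\<in>A. a + b \<notin> A)"

definition S_template :: "nat \<Rightarrow> nat \<Rightarrow> (nat \<Rightarrow> nat set) \<Rightarrow> bool" where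
  "S_template n p A \<longleftrightarrow>
     (\<Union>i\<in>{1..n}. A i) = {1..p} \<and>
     (\<forall>i\<in>{1..n}. \<forall>j\<in>{1..n}. i \<noteq> j \<longrightarrow> A i \<inter> A j = {}) \<and>
     (\<forall>i\<in>{1..n}. sum_free (A i)) \<and>
     (\<forall>i\<in>{1..n-1}. \<forall>x\<in>A i. \<forall>y\<in>A i. x + y > p \<longrightarrow> x + y - p \<notin> A i)"

definition S_plus :: "nat \<Rightarrow> nat" where
  "S_plus n = (GREATEST p. \<exists>A. S_template n p A)"

end

theory Submission
  imports Defs
begin

text \<open>
  Let B be an S-template of width p with n + 1 colours and C one of width q with k colours.
  Write x \<in> {1..p q} as x = p (t - 1) + r with t \<in> {1..q} and r \<in> {1..p}, and give x the
  B-colour i of r if i \<le> n, and the colour n + j if r has the last B-colour and t has the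
  C-colour j. When two numbers are added, so are their digits r, with a carry exactly when the
  digit sum exceeds p. A monochromatic sum without carry contradicts sum-freeness of the
  B-colour; with a carry it contradicts the modular condition on the first n colours of B, and
  for the last colour of B it turns into a monochromatic sum of the t's, forbidden by C. The
  modular condition modulo p q is inherited in the same way.

  Since S_plus is defined by GREATEST, widths of templates must also be bounded; Schur's
  pigeonhole argument bounds them by e n!.
\<close>

definition mod_sum_free :: "nat \<Rightarrow> nat set \<Rightarrow> bool" where
  "mod_sum_free p A \<longleftrightarrow> (\<forall>x\<in>A. \<forall>y\<in>A. p < x + y \<longrightarrow> x + y - p \<notin> A)"

lemma S_template_iff:
  "S_template n p A \<longleftrightarrow>
     (\<Union>i\<in>{1..n}. A i) = {1..p} \<and>
     (\<forall>i\<in>{1..n}. \<forall>j\<in>{1..n}. i \<noteq> j \<longrightarrow> A i \<inter> A j = {}) \<and>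
     (\<forall>i\<in>{1..n}. sum_free (A i)) \<and>
     (\<forall>i\<in>{1..n - 1}. mod_sum_free p (A i))"
  by (simp add: S_template_def mod_sum_free_def)

lemma S_template_subset: "S_template n p A \<Longrightarrow> i \<in> {1..n} \<Longrightarrow> A i \<subseteq> {1..p}"
  unfolding S_template_def by blast

lemma S_template_cover: "S_template n p A \<Longrightarrow> x \<in> {1..p} \<Longrightarrow> \<exists>i\<in>{1..n}. x \<in> A i"
  unfolding S_template_def by blast

lemma S_template_disjoint:
  "S_template n p A \<Longrightarrow> i \<in> {1..n} \<Longrightarrow> j \<in> {1..n} \<Longrightarrow> i \<noteq> j \<Longrightarrow> A i \<inter> A j = {}"
  unfolding S_template_def by blast

lemma S_template_sum_free: "S_template n p A \<Longrightarrow> i \<in> {1..n} \<Longrightarrow> sum_free (A i)"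
  unfolding S_template_def by blast

lemma S_template_mod_sum_free: "S_template n p A \<Longrightarrow> i \<in> {1..n - 1} \<Longrightarrow> mod_sum_free p (A i)"
  unfolding S_template_iff by blast

fun schur_bound :: "nat \<Rightarrow> nat" where
  "schur_bound 0 = 1"
| "schur_bound (Suc c) = Suc c * schur_bound c + 1"

lemma card_le_schur_bound:
  assumes "finite C" "finite X" "\<forall>i\<in>C. sum_free (A i)"
    and "\<And>x y. x \<in> X \<Longrightarrow> y \<in> X \<Longrightarrow> y < x \<Longrightarrow> \<exists>i\<in>C. x - y \<in> A i"
  shows "card X \<le> schur_bound (card C)"
  using assms
proof (induction C arbitrary: X rule: finite_remove_induct)
  case empty
  then have "x = y" if "x \<in> X" "y \<in> X" for x y
    using that by (metis empty_iff linorder_neqE_nat)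
  then show ?case using empty.prems(1) by (simp add: card_le_Suc0_iff_eq)
next
  case (remove C)
  show ?case
  proof (cases "X = {}")
    case False
    define x0 where "x0 = Min X"
    have x0: "x0 \<in> X" "\<And>x. x \<in> X \<Longrightarrow> x0 \<le> x"
      using False remove.prems(1) by (simp_all add: x0_def)
    define Y where "Y = (\<lambda>x. x - x0) ` (X - {x0})"
    have "inj_on (\<lambda>x. x - x0) (X - {x0})"
      by (rule inj_onI) (use x0(2) in fastforce)
    then have card_Y: "card X = Suc (card Y)"
      using card.remove[OF remove.prems(1) x0(1)] by (simp add: Y_def card_image)
    \<comment> \<open>Two elements of Y \<inter> A i differ by a difference of X, which avoids A i as A i is sum-free.\<close>
    have "card (Y \<inter> A i) \<le> schur_bound (card (C - {i}))" if "i \<in> C" for i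
    proof (rule remove.IH[OF that])
      show "\<forall>j\<in>C - {i}. sum_free (A j)" using remove.prems(2) by blast
      fix z z' assume z: "z \<in> Y \<inter> A i" "z' \<in> Y \<inter> A i" "z' < z"
      then obtain x x' where x: "x \<in> X" "x' \<in> X" "z = x - x0" "z' = x' - x0"
        unfolding Y_def by blast
      with z x0(2) have "x' < x" "z - z' = x - x'" by fastforce+
      with remove.prems(3) x obtain j where "j \<in> C" "z - z' \<in> A j" by metis
      moreover have "z - z' \<notin> A i"
        using remove.prems(2) \<open>i \<in> C\<close> z unfolding sum_free_def
        by (metis IntD2 le_add_diff_inverse less_imp_le_nat)
      ultimately show "\<exists>j\<in>C - {i}. z - z' \<in> A j" by blast
    qed (use remove.prems(1) in \<open>simp_all add: Y_def\<close>)
    then have class_bound: "card (Y \<inter> A i) \<le> schur_bound (card C - 1)" if "i \<in> C" for i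
      using that remove.hyps(1) by simp
    have "Y \<subseteq> (\<Union>i\<in>C. Y \<inter> A i)"
      using remove.prems(3) x0 by (fastforce simp: Y_def)
    then have "card Y \<le> card (\<Union>i\<in>C. Y \<inter> A i)"
      using remove.hyps(1) remove.prems(1) by (intro card_mono) (simp_all add: Y_def)
    also have "\<dots> \<le> (\<Sum>i\<in>C. card (Y \<inter> A i))"
      using remove.hyps(1) by (rule card_UN_le)
    also have "\<dots> \<le> card C * schur_bound (card C - 1)"
      using sum_mono[OF class_bound] by simp
    finally show ?thesis
      using card_Y remove.hyps(1,2) by (cases "card C") auto
  qed simp
qed

lemma S_template_width_less_schur_bound:
  assumes "S_template n p A"
  shows "p < schur_bound n"
proof -
  have "card {0..p} \<le> schur_bound (card {1..n})"
  proof (rule card_le_schur_bound)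
    show "\<forall>i\<in>{1..n}. sum_free (A i)"
      using S_template_sum_free[OF assms] by blast
    fix x y assume "x \<in> {0..p}" "y \<in> {0..p}" "y < x"
    then have "x - y \<in> {1..p}" by auto
    then show "\<exists>i\<in>{1..n}. x - y \<in> A i" by (rule S_template_cover[OF assms])
  qed simp_all
  then show ?thesis by simp
qed

lemma S_template_S_plus: "\<exists>A. S_template n (S_plus n) A"
proof -
  have "S_template n 0 (\<lambda>_. {})"
    by (simp add: S_template_def sum_free_def)
  then show ?thesis
    unfolding S_plus_def
    by (intro GreatestI_ex_nat[where P = "\<lambda>p. \<exists>A. S_template n p A" and b = "schur_bound n"])
      (auto dest: S_template_width_less_schur_bound)
qed

lemma S_template_le_S_plus: "S_template n p A \<Longrightarrow> p \<le> S_plus n"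
  unfolding S_plus_def
  by (rule Greatest_le_nat[where P = "\<lambda>p. \<exists>A. S_template n p A" and b = "schur_bound n"])
    (auto dest: S_template_width_less_schur_bound)

definition block_index :: "nat \<Rightarrow> nat \<times> nat \<Rightarrow> nat" where
  "block_index p = (\<lambda>(t, r). p * (t - 1) + r)"

lemma block_index_Suc [simp]: "block_index p (Suc t, r) = p * t + r"
  by (simp add: block_index_def)

lemma inj_on_block_index: "inj_on (block_index p) ({1..} \<times> {1..p})"
proof (rule inj_onI, clarify)
  fix t r t' r'
  assume "block_index p (t, r) = block_index p (t', r')"
    and ranges: "t \<ge> 1" "t' \<ge> 1" "r \<in> {1..p}" "r' \<in> {1..p}"
  then have eq: "p * (t - 1) + (r - 1) = p * (t' - 1) + (r' - 1)"
    by (simp add: block_index_def)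
  have "r - 1 < p" "r' - 1 < p" using ranges by auto
  then have "t - 1 = t' - 1 \<and> r - 1 = r' - 1"
    using arg_cong[OF eq, of "\<lambda>x. x div p"] arg_cong[OF eq, of "\<lambda>x. x mod p"] by simp
  then show "t = t' \<and> r = r'" using ranges by auto
qed

lemma bij_betw_block_index: "bij_betw (block_index p) ({1..q} \<times> {1..p}) {1..p * q}"
proof -
  have inj: "inj_on (block_index p) ({1..q} \<times> {1..p})"
    by (rule inj_on_subset[OF inj_on_block_index]) auto
  have "block_index p (t, r) \<in> {1..p * q}" if "t \<in> {1..q}" "r \<in> {1..p}" for t r
  proof -
    have "p * (t - 1) + r \<le> p * (t - 1) + p" using that by simp
    also have "\<dots> = p * t" using that by (cases t) auto
    also have "\<dots> \<le> p * q" using that by simp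
    finally show ?thesis using that by (simp add: block_index_def)
  qed
  then have "block_index p ` ({1..q} \<times> {1..p}) \<subseteq> {1..p * q}" by auto
  moreover have "card (block_index p ` ({1..q} \<times> {1..p})) = card {1..p * q}"
    using inj by (simp add: card_image card_cartesian_product)
  ultimately show ?thesis
    using inj by (simp add: bij_betw_def card_subset_eq)
qed

lemma block_index_add_cases:
  assumes "t1 \<ge> 1" "t2 \<ge> 1" "t3 \<ge> 1" "r1 \<in> {1..p}" "r2 \<in> {1..p}" "r3 \<in> {1..p}"
    and sum: "block_index p (t1, r1) + block_index p (t2, r2) = block_index p (t3, r3) + p * Q"
  shows "r3 = r1 + r2 \<and> t1 + t2 = t3 + Q + 1 \<or> p < r1 + r2 \<and> r3 = r1 + r2 - p \<and> t1 + t2 = t3 + Q"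
proof -
  obtain a1 a2 a3 where t: "t1 = Suc a1" "t2 = Suc a2" "t3 = Suc a3"
    using assms(1-3) by (metis One_nat_def Suc_le_D)
  note inj = inj_onD[OF inj_on_block_index]
  show ?thesis
  proof (cases "r1 + r2 \<le> p")
    case True
    have "block_index p (Suc (a1 + a2), r1 + r2) = block_index p (Suc (a3 + Q), r3)"
      using sum by (simp add: t algebra_simps)
    then have "(Suc (a1 + a2), r1 + r2) = (Suc (a3 + Q), r3)"
      by (rule inj) (use True assms(4-6) in auto)
    then show ?thesis using t by simp
  next
    case False
    have "block_index p (Suc (Suc (a1 + a2)), r1 + r2 - p) = block_index p (Suc (a3 + Q), r3)"
      using sum False by (simp add: t algebra_simps)
    then have "(Suc (Suc (a1 + a2)), r1 + r2 - p) = (Suc (a3 + Q), r3)"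
      by (rule inj) (use False assms(4-6) in auto)
    then show ?thesis using t False by simp
  qed
qed

lemma block_image_add:
  assumes "sum_free R" "R \<subseteq> {1..p}" "0 \<notin> T"
    and "x \<in> block_index p ` (T \<times> R)" "y \<in> block_index p ` (T \<times> R)" "z \<in> block_index p ` (T \<times> R)"
    and "x + y = z + p * Q"
  shows "(\<exists>r1\<in>R. \<exists>r2\<in>R. p < r1 + r2 \<and> r1 + r2 - p \<in> R) \<and> (\<exists>t1\<in>T. \<exists>t2\<in>T. \<exists>t3\<in>T. t1 + t2 = t3 + Q)"
proof -
  obtain t1 r1 t2 r2 t3 r3 where
    in_T: "t1 \<in> T" "t2 \<in> T" "t3 \<in> T" and in_R: "r1 \<in> R" "r2 \<in> R" "r3 \<in> R" and
    "x = block_index p (t1, r1)" "y = block_index p (t2, r2)" "z = block_index p (t3, r3)"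
    using assms(4-6) by blast
  with assms(2,3,7) have
    "r3 = r1 + r2 \<and> t1 + t2 = t3 + Q + 1 \<or> p < r1 + r2 \<and> r3 = r1 + r2 - p \<and> t1 + t2 = t3 + Q"
    by (intro block_index_add_cases) (auto simp: Suc_le_eq intro!: gr0I)
  moreover have "r1 + r2 \<noteq> r3"
    using assms(1) in_R by (auto simp: sum_free_def)
  ultimately show ?thesis using in_T in_R by auto
qed

lemma sum_free_block_image:
  assumes "sum_free R" "R \<subseteq> {1..p}" "0 \<notin> T" "mod_sum_free p R \<or> sum_free T"
  shows "sum_free (block_index p ` (T \<times> R))"
  unfolding sum_free_def
proof (intro ballI notI)
  fix x y assume "x \<in> block_index p ` (T \<times> R)" "y \<in> block_index p ` (T \<times> R)"
    "x + y \<in> block_index p ` (T \<times> R)"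
  from block_image_add[OF assms(1-3) this, of 0] assms(4) show False
    by (auto simp: mod_sum_free_def sum_free_def)
qed

lemma mod_sum_free_block_image:
  assumes "sum_free R" "R \<subseteq> {1..p}" "0 \<notin> T" "mod_sum_free p R \<or> mod_sum_free q T"
  shows "mod_sum_free (p * q) (block_index p ` (T \<times> R))"
  unfolding mod_sum_free_def
proof (intro ballI impI notI)
  fix x y assume "x \<in> block_index p ` (T \<times> R)" "y \<in> block_index p ` (T \<times> R)"
    "p * q < x + y" "x + y - p * q \<in> block_index p ` (T \<times> R)"
  from block_image_add[OF assms(1-3) this(1,2,4), of q] this(3) assms(3,4) show False
    by (auto simp: mod_sum_free_def) (metis add_diff_cancel_right' gr0I less_add_same_cancel2)
qed

definition product_cells ::
    "nat \<Rightarrow> nat \<Rightarrow> (nat \<Rightarrow> nat set) \<Rightarrow> (nat \<Rightarrow> nat set) \<Rightarrow> nat \<Rightarrow> (nat \<times> nat) set" where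
  "product_cells n q B C m = (if m \<le> n then {1..q} \<times> B m else C (m - n) \<times> B (n + 1))"

definition product_template ::
    "nat \<Rightarrow> nat \<Rightarrow> nat \<Rightarrow> (nat \<Rightarrow> nat set) \<Rightarrow> (nat \<Rightarrow> nat set) \<Rightarrow> nat \<Rightarrow> nat set" where
  "product_template n p q B C m = block_index p ` product_cells n q B C m"

context
  fixes n k p q :: nat and B C :: "nat \<Rightarrow> nat set"
  assumes B: "S_template (n + 1) p B" and C: "S_template k q C"
begin

lemma product_cells_subset:
  assumes "m \<in> {1..n + k}"
  shows "product_cells n q B C m \<subseteq> {1..q} \<times> {1..p}"
proof (cases "m \<le> n")
  case True
  with assms have "B m \<subseteq> {1..p}" by (intro S_template_subset[OF B]) auto
  then show ?thesis using True by (auto simp: product_cells_def)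
next
  case False
  with assms have "C (m - n) \<subseteq> {1..q}" by (intro S_template_subset[OF C]) auto
  moreover have "B (n + 1) \<subseteq> {1..p}" by (intro S_template_subset[OF B]) auto
  ultimately show ?thesis using False by (auto simp: product_cells_def)
qed

lemma UN_product_cells: "(\<Union>m\<in>{1..n + k}. product_cells n q B C m) = {1..q} \<times> {1..p}"
proof
  show "{1..q} \<times> {1..p} \<subseteq> (\<Union>m\<in>{1..n + k}. product_cells n q B C m)"
  proof clarify
    fix t r assume t: "t \<in> {1..q}" and r: "r \<in> {1..p}"
    obtain i where i: "i \<in> {1..n + 1}" "r \<in> B i"
      using S_template_cover[OF B r] by blast
    show "(t, r) \<in> (\<Union>m\<in>{1..n + k}. product_cells n q B C m)"
    proof (cases "i \<le> n")
      case True
      then have "(t, r) \<in> product_cells n q B C i" using t i by (simp add: product_cells_def)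
      then show ?thesis using i True by auto
    next
      case False
      with i have "r \<in> B (n + 1)" by (simp add: le_Suc_eq)
      obtain j where j: "j \<in> {1..k}" "t \<in> C j"
        using S_template_cover[OF C t] by blast
      have "(t, r) \<in> product_cells n q B C (n + j)"
        using \<open>r \<in> B (n + 1)\<close> j by (simp add: product_cells_def)
      then show ?thesis using j by force
    qed
  qed
qed (use product_cells_subset in blast)

lemma product_cells_disjoint:
  assumes "m \<in> {1..n + k}" "m' \<in> {1..n + k}" "m \<noteq> m'"
  shows "product_cells n q B C m \<inter> product_cells n q B C m' = {}"
proof (cases "m \<le> n \<or> m' \<le> n")
  case True
  note B_disjoint = S_template_disjoint[OF B]
  from B_disjoint[of m m'] B_disjoint[of m "n + 1"] B_disjoint[of m' "n + 1"] show ?thesis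
    using True assms by (auto simp: product_cells_def)
next
  case False
  then have "C (m - n) \<inter> C (m' - n) = {}"
    using assms by (intro S_template_disjoint[OF C]) auto
  then show ?thesis using False by (auto simp: product_cells_def)
qed

lemma sum_free_product_template:
  assumes m: "m \<in> {1..n + k}"
  shows "sum_free (product_template n p q B C m)"
proof (cases "m \<le> n")
  case True
  with m have m1: "m \<in> {1..n + 1}" and m2: "m \<in> {1..(n + 1) - 1}" by auto
  show ?thesis
    unfolding product_template_def product_cells_def if_P[OF True]
    by (intro sum_free_block_image S_template_sum_free[OF B m1] S_template_subset[OF B m1]
        disjI1 S_template_mod_sum_free[OF B m2]) auto
next
  case False
  with m have j: "m - n \<in> {1..k}" by auto
  have last: "n + 1 \<in> {1..n + 1}" by simp
  show ?thesis
    unfolding product_template_def product_cells_def if_not_P[OF False]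
    using S_template_subset[OF C j]
    by (intro sum_free_block_image S_template_sum_free[OF B last] S_template_subset[OF B last]
        disjI2 S_template_sum_free[OF C j]) auto
qed

lemma mod_sum_free_product_template:
  assumes m: "m \<in> {1..n + k - 1}"
  shows "mod_sum_free (p * q) (product_template n p q B C m)"
proof (cases "m \<le> n")
  case True
  with m have m1: "m \<in> {1..n + 1}" and m2: "m \<in> {1..(n + 1) - 1}" by auto
  show ?thesis
    unfolding product_template_def product_cells_def if_P[OF True]
    by (intro mod_sum_free_block_image S_template_sum_free[OF B m1] S_template_subset[OF B m1]
        disjI1 S_template_mod_sum_free[OF B m2]) auto
next
  case False
  with m have j: "m - n \<in> {1..k}" and j': "m - n \<in> {1..k - 1}" by auto
  have last: "n + 1 \<in> {1..n + 1}" by simp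
  show ?thesis
    unfolding product_template_def product_cells_def if_not_P[OF False]
    using S_template_subset[OF C j]
    by (intro mod_sum_free_block_image S_template_sum_free[OF B last] S_template_subset[OF B last]
        disjI2 S_template_mod_sum_free[OF C j']) auto
qed

lemma S_template_product: "S_template (n + k) (p * q) (product_template n p q B C)"
proof -
  have bij: "bij_betw (block_index p) ({1..q} \<times> {1..p}) {1..p * q}"
    by (rule bij_betw_block_index)
  have "(\<Union>m\<in>{1..n + k}. product_template n p q B C m) = {1..p * q}"
    unfolding product_template_def
    by (simp only: image_UN[symmetric] UN_product_cells bij_betw_imp_surj_on[OF bij])
  moreover have "product_template n p q B C m \<inter> product_template n p q B C m' = {}"
    if "m \<in> {1..n + k}" "m' \<in> {1..n + k}" "m \<noteq> m'" for m m'
    using inj_on_image_Int[OF bij_betw_imp_inj_on[OF bij] product_cells_subset product_cells_subset]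
      product_cells_disjoint that
    unfolding product_template_def by (metis image_empty)
  ultimately show ?thesis
    unfolding S_template_iff
    using sum_free_product_template mod_sum_free_product_template by blast
qed

end

theorem corollary2p7:
  fixes n k :: nat
  assumes "n \<ge> 1" and "k \<ge> 1"
  shows "S_plus (n + k) \<ge> S_plus (n + 1) * S_plus k"
proof -
  obtain B where B: "S_template (n + 1) (S_plus (n + 1)) B"
    using S_template_S_plus by blast
  obtain C where C: "S_template k (S_plus k) C"
    using S_template_S_plus by blast
  show ?thesis
    using S_template_product[OF B C] by (rule S_template_le_S_plus)
qed

end
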